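(* Let $M,N$ be complete pointed metric spaces and $f\colon M\to N$ a Lipschitz map with $f(0_M)=0_N$. Let $(x_n,y_n)_n$ be a sequence in $M\times M$ with $x_n\neq y_n$ for all $n$, and put $$m_n=\frac{\delta(f(x_n))-\delta(f(y_n))}{d(x_n,y_n)}\in\mathcal F(N).$$ Assume that $(m_n)_n$ converges weakly to some $\gamma\in\mathcal F(N)$. Then: (1) if $d(x_n,y_n)\to0$, then $\gamma=0$; (2) if $d(x_n,y_n)\to+\infty$, then $\gamma=0$; (3) if there exists $\alpha>0$ with $d(x_n,y_n)\ge\alpha$ for all $n$, and $\gamma\neq0$, then the sequence $(d(x_n,y_n))_n$ is bounded and $(f(x_n),f(y_n))_n$ has an accumulation point in $N\times N$.
   Context: Scalars are $\mathbb K=\mathbb R$ or $\mathbb C$. For a pointed metric space $(M,d,0_M)$, $\mathrm{Lip}_0(M)$ denotes the Banach space of Lipschitz functions $g\colon M\to\mathbb K$ with $g(0_M)=0$ normed by the best Lipschitz constant; $\delta(x)\in\mathrm{Lip}_0(M)^*$ is evaluation at $x$; the Lipschitz-free space $\mathcal F(M)$ is the norm-closed linear span of $\{\delta(x):x\in M\}$ in $\mathrm{Lip}_0(M)^*$, with dual $\mathrm{Lip}_0(M)$ (weak convergence in $\mathcal F(N)$ is with respect to this duality). *)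

theory Defs
  imports "HOL-Analysis.Analysis"
begin

text \<open>Lip_0(N) for a pointed metric space (N, dist, z) with scalars 'k
  (R or C; any real normed field is one of these).\<close>
definition Lip0 :: "'b::metric_space \<Rightarrow> ('b \<Rightarrow> 'k::real_normed_field) set" where
  "Lip0 z = {g. (\<exists>L. L-lipschitz_on UNIV g) \<and> g z = 0}"

definition delta :: "'b \<Rightarrow> ('b \<Rightarrow> 'k) \<Rightarrow> 'k" where
  "delta x = (\<lambda>g. g x)"

text \<open>Dual-norm bound: the functional phi has norm at most e on Lip_0(N),
  i.e. |phi g| \<le> e * L for every Lipschitz constant L of g (equivalently
  |phi g| \<le> e * Lip(g), since the best Lipschitz constant is attained).\<close>
definition dual_norm_le :: "'b::metric_space \<Rightarrow> (('b \<Rightarrow> 'k::real_normed_field) \<Rightarrow> 'k) \<Rightarrow> real \<Rightarrow> bool" where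
  "dual_norm_le z phi e \<longleftrightarrow>
     (\<forall>g\<in>Lip0 z. \<forall>L. L-lipschitz_on UNIV g \<longrightarrow> norm (phi g) \<le> e * L)"

definition span_deltas :: "(('b \<Rightarrow> 'k::real_normed_field) \<Rightarrow> 'k) set" where
  "span_deltas = {phi. \<exists>S c. finite S \<and> phi = (\<lambda>g. \<Sum>x\<in>S. c x * delta x g)}"

text \<open>The Lipschitz-free space F(N): norm-closure (in Lip_0(N)^*) of the span of
  the deltas.  Functionals are only meaningful on Lip_0(N).\<close>
definition free_space :: "'b::metric_space \<Rightarrow> (('b \<Rightarrow> 'k::real_normed_field) \<Rightarrow> 'k) set" where
  "free_space z = {gamma. \<exists>phi::nat \<Rightarrow> (('b \<Rightarrow> 'k) \<Rightarrow> 'k).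
      (\<forall>k. phi k \<in> span_deltas) \<and>
      (\<forall>e>0. \<exists>K. \<forall>k\<ge>K. dual_norm_le z (\<lambda>g. phi k g - gamma g) e)}"

definition weak_conv :: "'b::metric_space \<Rightarrow> (nat \<Rightarrow> ('b \<Rightarrow> 'k::real_normed_field) \<Rightarrow> 'k)
    \<Rightarrow> (('b \<Rightarrow> 'k) \<Rightarrow> 'k) \<Rightarrow> bool" where
  "weak_conv z m gamma \<longleftrightarrow> (\<forall>g\<in>Lip0 z. (\<lambda>n. m n g) \<longlonglongrightarrow> gamma g)"

definition is_zero_fun :: "'b::metric_space \<Rightarrow> (('b \<Rightarrow> 'k::real_normed_field) \<Rightarrow> 'k) \<Rightarrow> bool" where
  "is_zero_fun z gamma \<longleftrightarrow> (\<forall>g\<in>Lip0 z. gamma g = 0)"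

end

theory Submission
  imports Defs
begin

text \<open>
  Write \<open>a\<^sub>n = f x\<^sub>n\<close>, \<open>b\<^sub>n = f y\<^sub>n\<close> and \<open>d\<^sub>n = d(x\<^sub>n, y\<^sub>n)\<close>, and test \<open>m\<^sub>n\<close> against the
  1-Lipschitz functions \<open>infdist(-, Z)\<close>, which vanish on \<open>Z\<close>.
  Since \<open>\<gamma>\<close> lies in \<open>\<F>(N)\<close>, up to \<open>\<epsilon>\<close> it only sees the values of a test function on a finite set.
  If \<open>d\<^sub>n\<close> is unbounded, \<open>\<gamma>\<close> kills bounded Lipschitz functions, and truncating \<open>g\<close> above its values
  on that finite set shows \<open>\<gamma> g = 0\<close>.
  If \<open>\<gamma> \<noteq> 0\<close>, a single test function shows \<open>d(a\<^sub>n, b\<^sub>n) \<ge> c d\<^sub>n\<close> eventually.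
  When moreover \<open>d(a\<^sub>n, b\<^sub>n) \<rightarrow> 0\<close>, a greedily chosen subsequence yields a set \<open>Z\<close> containing the
  finite set, one point of each chosen pair, and nothing closer than \<open>d(a\<^sub>n, b\<^sub>n)/4\<close> to the
  other point; then \<open>|m\<^sub>n(infdist(-, Z))| \<ge> c/4\<close> along the subsequence, although
  \<open>|\<gamma>(infdist(-, Z))| \<le> c/8\<close>.
  In the third statement, if the pairs had no convergent subsequence, completeness lets us pass
  to a subsequence along which one coordinate is uniformly separated and the other convergent or
  separated; putting \<open>b\<close> into \<open>Z\<close> at even and \<open>a\<close> at odd selected indices makes
  \<open>m\<^sub>n(infdist(-, Z))\<close> oscillate, contradicting weak convergence.
\<close>

section \<open>Selecting subsequences\<close>

fun greedy_choices :: "(nat set \<Rightarrow> nat \<Rightarrow> bool) \<Rightarrow> nat \<Rightarrow> nat list" where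
  "greedy_choices P 0 = []"
| "greedy_choices P (Suc n) = greedy_choices P n @
     [LEAST j. (\<forall>i\<in>set (greedy_choices P n). i < j) \<and> P (set (greedy_choices P n)) j]"

lemma greedy_subseq:
  fixes P :: "nat set \<Rightarrow> nat \<Rightarrow> bool"
  assumes "\<And>A. finite A \<Longrightarrow> infinite {j. P A j}"
  shows "\<exists>\<sigma>::nat \<Rightarrow> nat. strict_mono \<sigma> \<and> (\<forall>n. P (\<sigma> ` {..<n}) (\<sigma> n))"
proof -
  let ?C = "greedy_choices P"
  define \<sigma> where "\<sigma> n = (LEAST j. (\<forall>i\<in>set (?C n). i < j) \<and> P (set (?C n)) j)" for n
  have set_C: "set (?C n) = \<sigma> ` {..<n}" for n
    by (induction n) (auto simp: \<sigma>_def lessThan_Suc)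
  have "\<exists>j. (\<forall>i\<in>set (?C n). i < j) \<and> P (set (?C n)) j" for n
  proof -
    have "infinite {j. P (set (?C n)) j}" by (rule assms) simp
    then obtain j where "Max (insert 0 (set (?C n))) < j" "P (set (?C n)) j"
      unfolding infinite_nat_iff_unbounded by blast
    then show ?thesis by (meson List.finite_set Max_ge finite_insert insertCI le_less_trans)
  qed
  then have \<sigma>: "(\<forall>i\<in>\<sigma> ` {..<n}. i < \<sigma> n) \<and> P (\<sigma> ` {..<n}) (\<sigma> n)" for n
    unfolding \<sigma>_def set_C[symmetric] by (rule LeastI_ex)
  moreover have "strict_mono \<sigma>"
    by (rule strict_monoI) (use \<sigma> in blast)
  ultimately show ?thesis by blast
qed

lemma greedy_subseq_pairwise:
  fixes R :: "nat \<Rightarrow> nat \<Rightarrow> bool"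
  assumes "\<And>i. eventually (R i) sequentially" and "eventually Q sequentially"
  obtains \<sigma> :: "nat \<Rightarrow> nat"
  where "strict_mono \<sigma>" "\<And>n. Q (\<sigma> n)" "\<And>i j. i < j \<Longrightarrow> R (\<sigma> i) (\<sigma> j)"
proof -
  have "eventually (\<lambda>j. (\<forall>i\<in>A. R i j) \<and> Q j) sequentially" if "finite A" for A
    using assms that by (simp add: eventually_ball_finite eventually_conj)
  then have "infinite {j. (\<forall>i\<in>A. R i j) \<and> Q j}" if "finite A" for A
    using that
    by (simp add: frequently_cofinite[symmetric] cofinite_eq_sequentially eventually_frequently)
  then have "\<exists>\<sigma>::nat \<Rightarrow> nat. strict_mono \<sigma> \<and> (\<forall>n. (\<forall>i\<in>\<sigma> ` {..<n}. R i (\<sigma> n)) \<and> Q (\<sigma> n))"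
    by (rule greedy_subseq[of "\<lambda>A j. (\<forall>i\<in>A. R i j) \<and> Q j"])
  then show thesis by (auto intro: that)
qed

lemma subseq_pairwise_far:
  fixes u v :: "nat \<Rightarrow> 'a::metric_space" and s :: "nat \<Rightarrow> real"
  assumes later: "\<forall>\<^sub>F i in sequentially. \<forall>\<^sub>F j in sequentially. s i \<le> dist (v i) (u j)"
    and earlier: "\<And>i. \<forall>\<^sub>F j in sequentially. s j \<le> dist (v j) (u i)"
    and "eventually Q sequentially"
  obtains \<sigma> :: "nat \<Rightarrow> nat"
  where "strict_mono \<sigma>" "\<And>k. Q (\<sigma> k)"
    "\<And>j k. j \<noteq> k \<Longrightarrow> s (\<sigma> k) \<le> dist (v (\<sigma> k)) (u (\<sigma> j))"
proof -
  define E where "E i \<longleftrightarrow> (\<forall>\<^sub>F j in sequentially. s i \<le> dist (v i) (u j))" for i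
  define R where "R i j \<longleftrightarrow> (E i \<longrightarrow> s i \<le> dist (v i) (u j)) \<and> s j \<le> dist (v j) (u i)" for i j
  have "\<forall>\<^sub>F j in sequentially. E i \<longrightarrow> s i \<le> dist (v i) (u j)" for i
    by (cases "E i") (simp_all add: E_def)
  then have R: "\<forall>\<^sub>F j in sequentially. R i j" for i
    unfolding R_def using earlier by (rule eventually_conj)
  have QE: "eventually (\<lambda>n. Q n \<and> E n) sequentially"
    using later \<open>eventually Q sequentially\<close> by (simp add: E_def eventually_conj)
  obtain \<sigma> :: "nat \<Rightarrow> nat"
    where \<sigma>: "strict_mono \<sigma>" "\<And>n. Q (\<sigma> n) \<and> E (\<sigma> n)" "\<And>i j. i < j \<Longrightarrow> R (\<sigma> i) (\<sigma> j)"
    using greedy_subseq_pairwise[of R "\<lambda>n. Q n \<and> E n", OF R QE] by blast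
  show thesis
  proof (rule that)
    show "s (\<sigma> k) \<le> dist (v (\<sigma> k)) (u (\<sigma> j))" if "j \<noteq> k" for j k
      using that \<sigma>(2)[of k] \<sigma>(3)[of j k] \<sigma>(3)[of k j] unfolding R_def by (cases "j < k") auto
  qed (use \<sigma> in auto)
qed

definition separated_seq :: "real \<Rightarrow> (nat \<Rightarrow> 'a::metric_space) \<Rightarrow> bool" where
  "separated_seq e x \<longleftrightarrow> (\<forall>i j. i \<noteq> j \<longrightarrow> e \<le> dist (x i) (x j))"

lemma separated_seq_subseq: "separated_seq e x \<Longrightarrow> strict_mono \<sigma> \<Longrightarrow> separated_seq e (x \<circ> \<sigma>)"
  by (auto simp: separated_seq_def strict_mono_eq)

lemma separated_seq_eventually_far:
  assumes "separated_seq e x"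
  shows "\<forall>\<^sub>F n in sequentially. e / 2 \<le> dist (x n) y"
proof -
  let ?near = "{n. \<not> e / 2 \<le> dist (x n) y}"
  have "n = m" if "n \<in> ?near" "m \<in> ?near" for n m
  proof (rule ccontr)
    assume "n \<noteq> m"
    then have "e \<le> dist (x n) (x m)"
      using assms unfolding separated_seq_def by blast
    with that dist_triangle[of "x n" "x m" y] show False by (simp add: dist_commute)
  qed
  then have "?near \<subseteq> {n}" if "n \<in> ?near" for n
    using that by blast
  then have "finite ?near"
    by (cases "?near = {}") (auto intro: finite_subset)
  then show ?thesis
    by (simp add: eventually_cofinite[symmetric] cofinite_eq_sequentially)
qed

lemma convergent_or_separated_subseq:
  fixes x :: "nat \<Rightarrow> 'a::complete_space"
  obtains \<sigma> :: "nat \<Rightarrow> nat"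
  where "strict_mono \<sigma>" "convergent (x \<circ> \<sigma>) \<or> (\<exists>e>0. separated_seq e (x \<circ> \<sigma>))"
proof (cases "Met_TC.mtotally_bounded (range x)")
  case True
  then have "\<exists>\<sigma>::nat \<Rightarrow> nat. strict_mono \<sigma> \<and> Cauchy (x \<circ> \<sigma>)"
    unfolding Met_TC.mtotally_bounded_sequentially by simp
  then show thesis using that Cauchy_convergent by blast
next
  case False
  then obtain e where "e > 0"
    and not_covered: "\<And>K. finite K \<Longrightarrow> K \<subseteq> range x \<Longrightarrow> \<not> range x \<subseteq> (\<Union>y\<in>K. ball y e)"
    unfolding Met_TC.mtotally_bounded_def by auto
  have "infinite {j. \<forall>i\<in>A. e \<le> dist (x i) (x j)}" if "finite A" for A
  proof
    let ?B = "{j. \<forall>i\<in>A. e \<le> dist (x i) (x j)}"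
    assume "finite ?B"
    have "x j \<in> (\<Union>y\<in>x ` (A \<union> ?B). ball y e)" for j
    proof (cases "j \<in> ?B")
      case True
      with \<open>e > 0\<close> show ?thesis by auto
    next
      case False
      then obtain i where "i \<in> A" "dist (x i) (x j) < e" by (auto simp: not_le)
      then show ?thesis by auto
    qed
    then have "range x \<subseteq> (\<Union>y\<in>x ` (A \<union> ?B). ball y e)" by blast
    with not_covered[of "x ` (A \<union> ?B)"] \<open>finite ?B\<close> that show False by blast
  qed
  then obtain \<sigma> :: "nat \<Rightarrow> nat"
    where \<sigma>: "strict_mono \<sigma>" "\<And>n. \<forall>i\<in>\<sigma> ` {..<n}. e \<le> dist (x i) (x (\<sigma> n))"
    using greedy_subseq[of "\<lambda>A j. \<forall>i\<in>A. e \<le> dist (x i) (x j)"] by blast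
  have "e \<le> dist (x (\<sigma> i)) (x (\<sigma> j))" if "i < j" for i j
    using \<sigma>(2)[of j] that by blast
  then have "separated_seq e (x \<circ> \<sigma>)"
    unfolding separated_seq_def by (metis comp_apply dist_commute nat_neq_iff)
  with \<sigma>(1) \<open>e > 0\<close> show thesis using that by blast
qed

lemma separated_pair_subseq:
  fixes a b :: "nat \<Rightarrow> 'a::complete_space"
  assumes no_conv: "\<And>\<sigma> :: nat \<Rightarrow> nat. strict_mono \<sigma> \<Longrightarrow> \<not> convergent ((\<lambda>n. (a n, b n)) \<circ> \<sigma>)"
  obtains \<tau> :: "nat \<Rightarrow> nat" and \<eta> where "strict_mono \<tau>" "\<eta> > 0"
    "separated_seq \<eta> (b \<circ> \<tau>) \<and> (convergent (a \<circ> \<tau>) \<or> (\<exists>e>0. separated_seq e (a \<circ> \<tau>))) \<or>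
     separated_seq \<eta> (a \<circ> \<tau>) \<and> (convergent (b \<circ> \<tau>) \<or> (\<exists>e>0. separated_seq e (b \<circ> \<tau>)))"
proof -
  obtain \<tau>\<^sub>1 :: "nat \<Rightarrow> nat" where \<tau>\<^sub>1: "strict_mono \<tau>\<^sub>1"
    "convergent (a \<circ> \<tau>\<^sub>1) \<or> (\<exists>e>0. separated_seq e (a \<circ> \<tau>\<^sub>1))"
    by (rule convergent_or_separated_subseq)
  obtain \<tau>\<^sub>2 :: "nat \<Rightarrow> nat" where \<tau>\<^sub>2: "strict_mono \<tau>\<^sub>2"
    "convergent (b \<circ> \<tau>\<^sub>1 \<circ> \<tau>\<^sub>2) \<or> (\<exists>e>0. separated_seq e (b \<circ> \<tau>\<^sub>1 \<circ> \<tau>\<^sub>2))"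
    by (rule convergent_or_separated_subseq)
  define \<tau> where "\<tau> = \<tau>\<^sub>1 \<circ> \<tau>\<^sub>2"
  have "strict_mono \<tau>"
    unfolding \<tau>_def using \<tau>\<^sub>1(1) \<tau>\<^sub>2(1) by (rule strict_mono_o)
  have a: "convergent (a \<circ> \<tau>) \<or> (\<exists>e>0. separated_seq e (a \<circ> \<tau>))"
    using \<tau>\<^sub>1(2) convergent_subseq_convergent[OF _ \<tau>\<^sub>2(1)] separated_seq_subseq[OF _ \<tau>\<^sub>2(1)]
    unfolding \<tau>_def o_assoc by blast
  have b: "convergent (b \<circ> \<tau>) \<or> (\<exists>e>0. separated_seq e (b \<circ> \<tau>))"
    using \<tau>\<^sub>2(2) unfolding \<tau>_def o_assoc .
  have "\<not> (convergent (a \<circ> \<tau>) \<and> convergent (b \<circ> \<tau>))"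
  proof
    assume "convergent (a \<circ> \<tau>) \<and> convergent (b \<circ> \<tau>)"
    then obtain p q where "(a \<circ> \<tau>) \<longlonglongrightarrow> p" "(b \<circ> \<tau>) \<longlonglongrightarrow> q"
      unfolding convergent_def by blast
    then have "((\<lambda>n. (a n, b n)) \<circ> \<tau>) \<longlonglongrightarrow> (p, q)"
      unfolding o_def by (rule tendsto_Pair)
    with no_conv[OF \<open>strict_mono \<tau>\<close>] show False
      unfolding convergent_def by blast
  qed
  with a b \<open>strict_mono \<tau>\<close> show thesis
    using that by blast
qed

lemma tendsto_le_if_frequently_le:
  fixes f :: "'a \<Rightarrow> real"
  assumes "(f \<longlongrightarrow> l) F" "\<exists>\<^sub>F x in F. f x \<le> c"
  shows "l \<le> c"
proof (rule ccontr)
  assume "\<not> l \<le> c"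
  then have "\<forall>\<^sub>F x in F. c < f x"
    using assms(1) by (simp add: order_tendstoD(1))
  then have "\<forall>\<^sub>F x in F. \<not> f x \<le> c"
    by eventually_elim simp
  with assms(2) show False
    by (simp add: frequently_def)
qed

lemma frequently_ge_if_unbounded:
  fixes d :: "nat \<Rightarrow> real"
  assumes "\<And>n. 0 \<le> d n" "\<not> bounded (range d)"
  shows "\<exists>\<^sub>F n in sequentially. B \<le> d n"
proof (rule ccontr)
  assume "\<not> (\<exists>\<^sub>F n in sequentially. B \<le> d n)"
  then have "\<forall>\<^sub>F n in sequentially. norm (d n) \<le> norm B"
    unfolding not_frequently by eventually_elim (use assms(1) in auto)
  then have "Bseq d"
    using Bfun_const by (rule Bseq_eventually_mono)
  with assms(2) show False
    by (simp add: Bseq_eq_bounded)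
qed

lemma unbounded_if_filterlim_at_top:
  fixes d :: "nat \<Rightarrow> real"
  assumes "filterlim d at_top sequentially"
  shows "\<not> bounded (range d)"
proof
  assume "bounded (range d)"
  then obtain B where "\<forall>r\<in>range d. \<bar>r\<bar> \<le> B"
    unfolding bounded_real by blast
  moreover obtain n where "B + 1 \<le> d n"
    using assms unfolding filterlim_at_top eventually_sequentially by blast
  ultimately show False
    by (metis abs_le_D1 add_le_same_cancel1 not_one_le_zero order_trans rangeI)
qed

lemma zero_if_norm_le_multiples:
  fixes x :: "'a::real_normed_vector"
  assumes "\<And>e. 0 < e \<Longrightarrow> norm x \<le> e * K"
  shows "x = 0"
proof -
  have "norm x \<le> 0 + \<delta>" if "0 < \<delta>" for \<delta>
  proof -
    have "0 < \<delta> / (\<bar>K\<bar> + 1)"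
      using that by simp
    then have "norm x \<le> \<delta> / (\<bar>K\<bar> + 1) * K"
      by (rule assms)
    also have "\<dots> \<le> \<delta> / (\<bar>K\<bar> + 1) * \<bar>K\<bar>"
      using that by (intro mult_left_mono) auto
    also have "\<dots> \<le> \<delta>"
      using that by (simp add: field_simps)
    finally show ?thesis by simp
  qed
  then have "norm x \<le> 0"
    by (rule field_le_epsilon)
  then show ?thesis by simp
qed

lemma not_convergent_if_subseqs_apart:
  fixes q :: "nat \<Rightarrow> real" and \<sigma> \<tau> :: "nat \<Rightarrow> nat"
  assumes "strict_mono \<sigma>" "strict_mono \<tau>" "\<And>k. x \<le> q (\<sigma> k)" "\<And>k. q (\<tau> k) \<le> y" "y < x"
  shows "\<not> convergent q"
proof
  assume "convergent q"
  then obtain L where L: "q \<longlonglongrightarrow> L"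
    unfolding convergent_def by blast
  have "x \<le> L"
    using LIMSEQ_subseq_LIMSEQ[OF L assms(1)] assms(3) by (intro tendsto_lowerbound) (auto simp: o_def)
  moreover have "L \<le> y"
    using LIMSEQ_subseq_LIMSEQ[OF L assms(2)] assms(4) by (intro tendsto_upperbound) (auto simp: o_def)
  ultimately show False
    using assms(5) by simp
qed

lemma convergent_diff_quotient_swap:
  fixes x y d :: "nat \<Rightarrow> real"
  shows "convergent (\<lambda>n. (y n - x n) / d n) \<longleftrightarrow> convergent (\<lambda>n. (x n - y n) / d n)"
  using convergent_minus_iff[of "\<lambda>n. (x n - y n) / d n"] by (simp add: minus_divide_left)

lemma convergent_if_of_real_tendsto:
  assumes "(\<lambda>n. of_real (q n) :: 'k::real_normed_field) \<longlonglongrightarrow> l"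
  shows "convergent q"
proof -
  have "Cauchy (\<lambda>n. of_real (q n) :: 'k)"
    using assms by (rule LIMSEQ_imp_Cauchy)
  then have "Cauchy q"
    unfolding Cauchy_def by simp
  then show ?thesis
    by (simp add: Cauchy_convergent_iff)
qed

lemma frequently_mem_if_subseq_tendsto:
  assumes "strict_mono \<sigma>" "(X \<circ> \<sigma>) \<longlonglongrightarrow> l" "open U" "l \<in> U"
  shows "\<exists>\<^sub>F n in sequentially. X n \<in> U"
  unfolding frequently_def
proof
  assume "\<forall>\<^sub>F n in sequentially. X n \<notin> U"
  then have "\<forall>\<^sub>F k in sequentially. X (\<sigma> k) \<notin> U"
    by (rule eventually_subseq[OF assms(1)])
  moreover have "\<forall>\<^sub>F k in sequentially. X (\<sigma> k) \<in> U"
    using topological_tendstoD[OF assms(2-4)] by simp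
  ultimately have "\<forall>\<^sub>F k in sequentially. False"
    by eventually_elim simp
  then show False
    by simp
qed

lemma dist_tendsto_zero_if_lipschitz:
  assumes "C-lipschitz_on UNIV f" "(\<lambda>n. dist (x n) (y n)) \<longlonglongrightarrow> 0"
  shows "(\<lambda>n. dist (f (x n)) (f (y n))) \<longlonglongrightarrow> 0"
proof -
  have "\<forall>n. norm (dist (f (x n)) (f (y n))) \<le> C * dist (x n) (y n)"
    using lipschitz_onD[OF assms(1)] by simp
  then show ?thesis
    by (rule Lim_null_comparison[OF always_eventually tendsto_mult_right_zero[OF assms(2)]])
qed

section \<open>Distance functions separating pairs of points\<close>

lemma infdist_geI: "A \<noteq> {} \<Longrightarrow> (\<And>y. y \<in> A \<Longrightarrow> e \<le> dist x y) \<Longrightarrow> e \<le> infdist x A"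
  by (simp add: infdist_notempty cINF_greatest)

definition isolated_pairs :: "(nat \<Rightarrow> 'a::metric_space) \<Rightarrow> (nat \<Rightarrow> 'a) \<Rightarrow> bool" where
  "isolated_pairs u v \<longleftrightarrow>
     (\<forall>y. \<forall>\<^sub>F j in sequentially. dist (u j) (v j) / 4 \<le> dist (v j) y) \<and>
     (\<forall>\<^sub>F i in sequentially. \<forall>\<^sub>F j in sequentially. dist (u i) (v i) / 4 \<le> dist (v i) (u j))"

lemma infdist_gap_subseq:
  fixes u v :: "nat \<Rightarrow> 'a::metric_space"
  assumes "finite F" "isolated_pairs u v"
  obtains Z and \<sigma> :: "nat \<Rightarrow> nat" where "F \<subseteq> Z" "strict_mono \<sigma>"
    "\<And>k. dist (u (\<sigma> k)) (v (\<sigma> k)) / 4 \<le> infdist (v (\<sigma> k)) Z - infdist (u (\<sigma> k)) Z"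
proof -
  note avoid = assms(2)[unfolded isolated_pairs_def, THEN conjunct1, rule_format]
    and later = assms(2)[unfolded isolated_pairs_def, THEN conjunct2]
  have "\<forall>\<^sub>F n in sequentially. \<forall>y\<in>F. dist (u n) (v n) / 4 \<le> dist (v n) y"
    using \<open>finite F\<close> avoid by (simp add: eventually_ball_finite)
  then obtain \<sigma> :: "nat \<Rightarrow> nat" where \<sigma>: "strict_mono \<sigma>"
    "\<And>k. \<forall>y\<in>F. dist (u (\<sigma> k)) (v (\<sigma> k)) / 4 \<le> dist (v (\<sigma> k)) y"
    "\<And>j k. j \<noteq> k \<Longrightarrow> dist (u (\<sigma> k)) (v (\<sigma> k)) / 4 \<le> dist (v (\<sigma> k)) (u (\<sigma> j))"
    using subseq_pairwise_far[OF later avoid] by blast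
  define Z where "Z = F \<union> range (u \<circ> \<sigma>)"
  have far: "dist (u (\<sigma> k)) (v (\<sigma> k)) / 4 \<le> infdist (v (\<sigma> k)) Z" for k
  proof (rule infdist_geI)
    fix y assume "y \<in> Z"
    then consider "y \<in> F" | j where "y = u (\<sigma> j)"
      unfolding Z_def by auto
    then show "dist (u (\<sigma> k)) (v (\<sigma> k)) / 4 \<le> dist (v (\<sigma> k)) y"
    proof cases
      case (2 j)
      then show ?thesis using \<sigma>(3)[of j k] by (cases "j = k") (auto simp: dist_commute)
    qed (use \<sigma>(2) in blast)
  qed (simp add: Z_def)
  show thesis
  proof (rule that[of Z \<sigma>])
    show "dist (u (\<sigma> k)) (v (\<sigma> k)) / 4 \<le> infdist (v (\<sigma> k)) Z - infdist (u (\<sigma> k)) Z" for k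
      using far[of k] by (simp add: Z_def)
  qed (simp_all add: Z_def \<sigma>(1))
qed

lemma isolated_pairs_if_separated:
  assumes "e > 0" "separated_seq e a" and shrink: "(\<lambda>n. dist (a n) (b n)) \<longlonglongrightarrow> 0"
  shows "isolated_pairs a b"
proof -
  have small: "\<forall>\<^sub>F n in sequentially. dist (a n) (b n) < e / 4"
    using \<open>e > 0\<close> by (intro order_tendstoD(2)[OF shrink]) simp
  have "\<forall>\<^sub>F j in sequentially. dist (a j) (b j) / 4 \<le> dist (b j) y" for y
    using small separated_seq_eventually_far[OF assms(2), of y]
  proof eventually_elim
    case (elim j)
    then show ?case
      using dist_triangle[of "a j" y "b j"] zero_le_dist[of "a j" "b j"] by linarith
  qed
  moreover have "\<forall>\<^sub>F j in sequentially. dist (a i) (b i) / 4 \<le> dist (b i) (a j)"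
    if "dist (a i) (b i) < e / 4" for i
    using separated_seq_eventually_far[OF assms(2), of "b i"]
  proof eventually_elim
    case (elim j)
    then show ?case
      using that zero_le_dist[of "a i" "b i"] dist_commute[of "b i" "a j"] by linarith
  qed
  with small have "\<forall>\<^sub>F i in sequentially. \<forall>\<^sub>F j in sequentially. dist (a i) (b i) / 4 \<le> dist (b i) (a j)"
    by (auto elim: eventually_mono)
  ultimately show ?thesis
    unfolding isolated_pairs_def by blast
qed

lemma isolated_pairs_if_tendsto:
  assumes "a \<longlonglongrightarrow> p" and shrink: "(\<lambda>n. dist (a n) (b n)) \<longlonglongrightarrow> 0"
  obtains u v where "\<And>n. (u n, v n) = (a n, b n) \<or> (u n, v n) = (b n, a n)" "isolated_pairs u v"
proof -
  define u where "u n = (if dist (a n) p \<le> dist (b n) p then a n else b n)" for n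
  define v where "v n = (if dist (a n) p \<le> dist (b n) p then b n else a n)" for n
  define r where "r n = dist (a n) (b n)" for n
  have r_uv: "dist (u n) (v n) = r n" for n
    by (simp add: u_def v_def r_def dist_commute)
  have closer: "dist (u n) p \<le> dist (v n) p" for n
    by (simp add: u_def v_def)
  have r_le: "r n \<le> 2 * dist (v n) p" for n
    using dist_triangle3[of "u n" "v n" p] closer[of n] r_uv[of n] by (simp add: dist_commute)
  have v_le: "dist (v n) p \<le> dist (a n) p + r n" for n
    using dist_triangle[of "b n" p "a n"] by (simp add: v_def r_def dist_commute)
  have lim: "(\<lambda>n. dist (a n) p + r n) \<longlonglongrightarrow> 0"
    using tendsto_dist_iff[THEN iffD1, OF \<open>a \<longlonglongrightarrow> p\<close>] shrink unfolding r_def by (rule tendsto_add_zero)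
  have "v \<longlonglongrightarrow> p"
    by (rule tendsto_dist_iff[THEN iffD2], rule Lim_null_comparison[OF always_eventually lim])
      (use v_le in simp)
  have "u \<longlonglongrightarrow> p"
    by (rule tendsto_dist_iff[THEN iffD2], rule Lim_null_comparison[OF always_eventually lim])
      (use closer v_le order_trans in fastforce)
  have "\<forall>\<^sub>F j in sequentially. dist (u j) (v j) / 4 \<le> dist (v j) y" for y
  proof (cases "y = p")
    case True
    have "dist (u j) (v j) / 4 \<le> dist (v j) p" for j
      using r_le[of j] r_uv[of j] zero_le_dist[of "v j" p] by linarith
    then show ?thesis using True by simp
  next
    case False
    have "(\<lambda>j. dist (v j) y - dist (u j) (v j) / 4) \<longlonglongrightarrow> dist p y - 0 / 4"
      unfolding r_uv r_def by (intro tendsto_intros \<open>v \<longlonglongrightarrow> p\<close> shrink) simp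
    moreover have "0 < dist p y - 0 / 4"
      using False by simp
    ultimately have "\<forall>\<^sub>F j in sequentially. 0 < dist (v j) y - dist (u j) (v j) / 4"
      by (rule order_tendstoD(1))
    then show ?thesis by eventually_elim simp
  qed
  moreover have "\<forall>\<^sub>F j in sequentially. dist (u i) (v i) / 4 \<le> dist (v i) (u j)" for i
  proof (cases "r i = 0")
    case False
    then have "dist (u i) (v i) / 4 < dist (v i) p"
      using r_le[of i] r_uv[of i] zero_le_dist[of "a i" "b i"] unfolding r_def by linarith
    moreover have "(\<lambda>j. dist (v i) (u j)) \<longlonglongrightarrow> dist (v i) p"
      by (intro tendsto_intros \<open>u \<longlonglongrightarrow> p\<close>)
    ultimately have "\<forall>\<^sub>F j in sequentially. dist (u i) (v i) / 4 < dist (v i) (u j)"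
      by (rule order_tendstoD(1)[rotated])
    then show ?thesis
      by eventually_elim simp
  qed (simp add: r_uv)
  ultimately show thesis
    by (intro that[of u v]) (auto simp: isolated_pairs_def u_def v_def)
qed

lemma shrinking_pairs_infdist_gap:
  fixes a b :: "nat \<Rightarrow> 'a::complete_space"
  assumes "finite F" and shrink: "(\<lambda>n. dist (a n) (b n)) \<longlonglongrightarrow> 0"
  obtains Z and \<mu> :: "nat \<Rightarrow> nat" where "F \<subseteq> Z" "strict_mono \<mu>"
    "\<And>k. dist (a (\<mu> k)) (b (\<mu> k)) / 4 \<le> \<bar>infdist (a (\<mu> k)) Z - infdist (b (\<mu> k)) Z\<bar>"
proof -
  obtain \<tau> :: "nat \<Rightarrow> nat" where \<tau>: "strict_mono \<tau>"
    "convergent (a \<circ> \<tau>) \<or> (\<exists>e>0. separated_seq e (a \<circ> \<tau>))"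
    by (rule convergent_or_separated_subseq)
  have shrink': "(\<lambda>n. dist ((a \<circ> \<tau>) n) ((b \<circ> \<tau>) n)) \<longlonglongrightarrow> 0"
    using LIMSEQ_subseq_LIMSEQ[OF shrink \<tau>(1)] by (simp add: o_def)
  obtain u v where uv: "\<And>n. (u n, v n) = ((a \<circ> \<tau>) n, (b \<circ> \<tau>) n) \<or> (u n, v n) = ((b \<circ> \<tau>) n, (a \<circ> \<tau>) n)"
    and "isolated_pairs u v"
  proof (cases "convergent (a \<circ> \<tau>)")
    case True
    then show thesis
      using isolated_pairs_if_tendsto[OF _ shrink'] that unfolding convergent_def by blast
  next
    case False
    then show thesis
      using isolated_pairs_if_separated[OF _ _ shrink'] \<tau>(2) that by blast
  qed
  then obtain Z and \<sigma> :: "nat \<Rightarrow> nat" where "F \<subseteq> Z" "strict_mono \<sigma>"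
    and gap: "\<And>k. dist (u (\<sigma> k)) (v (\<sigma> k)) / 4 \<le> infdist (v (\<sigma> k)) Z - infdist (u (\<sigma> k)) Z"
    using infdist_gap_subseq[OF \<open>finite F\<close>] by blast
  show thesis
  proof (rule that[of Z "\<tau> \<circ> \<sigma>"])
    show "strict_mono (\<tau> \<circ> \<sigma>)"
      using \<tau>(1) \<open>strict_mono \<sigma>\<close> by (rule strict_mono_o)
    show "dist (a ((\<tau> \<circ> \<sigma>) k)) (b ((\<tau> \<circ> \<sigma>) k)) / 4
        \<le> \<bar>infdist (a ((\<tau> \<circ> \<sigma>) k)) Z - infdist (b ((\<tau> \<circ> \<sigma>) k)) Z\<bar>" for k
      using gap[of k] uv[of "\<sigma> k"] by (auto simp: dist_commute abs_if)
  qed fact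
qed

lemma eventually_far_if_convergent_or_separated:
  fixes a b :: "nat \<Rightarrow> 'a::metric_space"
  assumes "\<eta> > 0" "separated_seq \<eta> b" "convergent a \<or> (\<exists>e>0. separated_seq e a)"
  obtains \<beta> where "\<beta> > 0" "\<forall>\<^sub>F i in sequentially. \<forall>\<^sub>F j in sequentially. \<beta> \<le> dist (b i) (a j)"
proof (cases "convergent a")
  case True
  then obtain p where "a \<longlonglongrightarrow> p"
    unfolding convergent_def by blast
  then have near: "\<forall>\<^sub>F j in sequentially. dist (a j) p < \<eta> / 4"
    using \<open>\<eta> > 0\<close> by (intro order_tendstoD(2)[OF tendsto_dist_iff[THEN iffD1]]) simp_all
  have "\<forall>\<^sub>F i in sequentially. \<forall>\<^sub>F j in sequentially. \<eta> / 4 \<le> dist (b i) (a j)"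
    using separated_seq_eventually_far[OF assms(2), of p]
  proof eventually_elim
    case (elim i)
    from near show ?case
    proof eventually_elim
      case (elim j)
      with \<open>\<eta> / 2 \<le> dist (b i) p\<close> show ?case
        using dist_triangle[of "b i" p "a j"] by linarith
    qed
  qed
  with \<open>\<eta> > 0\<close> show thesis
    by (intro that[of "\<eta> / 4"]) simp_all
next
  case False
  with assms(3) obtain e where "e > 0" "separated_seq e a"
    by blast
  then have "\<forall>\<^sub>F j in sequentially. e / 2 \<le> dist (b i) (a j)" for i
    using separated_seq_eventually_far[of e a "b i"] by (simp add: dist_commute)
  with \<open>e > 0\<close> show thesis
    by (intro that[of "e / 2"]) simp_all
qed

lemma infdist_interleaved_ge:
  fixes A B :: "nat \<Rightarrow> 'a::metric_space"
  assumes "separated_seq \<eta> B" "s \<le> \<eta>"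
    and "\<And>k. s \<le> dist (B k) z" "\<And>k. \<rho> \<le> dist (A k) (B k)"
    and "\<And>j k. j \<noteq> k \<Longrightarrow> s \<le> dist (B k) (A j)"
  shows "min s \<rho> \<le> infdist (B (2 * k + 1)) (insert z (range (\<lambda>j. B (2 * j)) \<union> range (\<lambda>j. A (2 * j + 1))))"
proof (rule infdist_geI)
  fix y assume "y \<in> insert z (range (\<lambda>j. B (2 * j)) \<union> range (\<lambda>j. A (2 * j + 1)))"
  then consider "y = z" | j where "y = B (2 * j)" | j where "y = A (2 * j + 1)"
    by blast
  then show "min s \<rho> \<le> dist (B (2 * k + 1)) y"
  proof cases
    case 1
    then show ?thesis using assms(3) by (simp add: min_le_iff_disj)
  next
    case (2 j)
    have "2 * k + 1 \<noteq> 2 * j" by presburger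
    then have "\<eta> \<le> dist (B (2 * k + 1)) y"
      using assms(1) 2 unfolding separated_seq_def by blast
    then show ?thesis using assms(2) by (simp add: min_le_iff_disj)
  next
    case (3 j)
    then show ?thesis
      using assms(4)[of "2 * k + 1"] assms(5)[of "2 * j + 1" "2 * k + 1"]
      by (cases "j = k") (auto simp: min_le_iff_disj dist_commute)
  qed
qed simp

lemma infdist_quotient_oscillates:
  fixes a b :: "nat \<Rightarrow> 'a::metric_space"
  assumes "\<eta> > 0" and sep: "separated_seq \<eta> b" and "convergent a \<or> (\<exists>e>0. separated_seq e a)"
    and "\<rho> > 0" and apart: "\<forall>\<^sub>F n in sequentially. \<rho> \<le> dist (a n) (b n)"
    and d: "\<And>n. 0 < d n" "\<And>n. d n \<le> D"
  shows "\<exists>Z. z \<in> Z \<and> \<not> convergent (\<lambda>n. (infdist (a n) Z - infdist (b n) Z) / d n)"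
proof -
  obtain \<beta> where "\<beta> > 0" and far: "\<forall>\<^sub>F i in sequentially. \<forall>\<^sub>F j in sequentially. \<beta> \<le> dist (b i) (a j)"
    using eventually_far_if_convergent_or_separated[OF assms(1-3)] by blast
  define s where "s = min \<beta> (\<eta> / 2)"
  have "\<forall>\<^sub>F i in sequentially. \<forall>\<^sub>F j in sequentially. s \<le> dist (b i) (a j)"
    using far by eventually_elim (auto simp: s_def elim: eventually_mono)
  moreover have "\<forall>\<^sub>F j in sequentially. s \<le> dist (b j) (a i)" for i
    using separated_seq_eventually_far[OF sep, of "a i"] by eventually_elim (simp add: s_def)
  moreover have "\<forall>\<^sub>F n in sequentially. s \<le> dist (b n) z \<and> \<rho> \<le> dist (a n) (b n)"
    using separated_seq_eventually_far[OF sep, of z] apart by eventually_elim (simp add: s_def)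
  ultimately obtain \<sigma> :: "nat \<Rightarrow> nat" where \<sigma>: "strict_mono \<sigma>"
    "\<And>k. s \<le> dist (b (\<sigma> k)) z \<and> \<rho> \<le> dist (a (\<sigma> k)) (b (\<sigma> k))"
    "\<And>j k. j \<noteq> k \<Longrightarrow> s \<le> dist (b (\<sigma> k)) (a (\<sigma> j))"
    using subseq_pairwise_far[of "\<lambda>_. s" b a] by blast
  define Z where "Z = insert z (range (\<lambda>k. b (\<sigma> (2 * k))) \<union> range (\<lambda>k. a (\<sigma> (2 * k + 1))))"
  define q where "q n = (infdist (a n) Z - infdist (b n) Z) / d n" for n
  define m where "m = min s \<rho>"
  have "m > 0"
    using \<open>\<beta> > 0\<close> \<open>\<eta> > 0\<close> \<open>\<rho> > 0\<close> by (simp add: m_def s_def)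
  have "0 \<le> q (\<sigma> (2 * k))" for k
    using d(1)[of "\<sigma> (2 * k)"] by (simp add: q_def Z_def infdist_nonneg divide_nonneg_pos)
  moreover have "q (\<sigma> (2 * k + 1)) \<le> - m / D" for k
  proof -
    have "separated_seq \<eta> (b \<circ> \<sigma>)" "s \<le> \<eta>"
      using separated_seq_subseq[OF sep \<sigma>(1)] \<open>\<eta> > 0\<close> by (simp_all add: s_def)
    moreover have "s \<le> dist ((b \<circ> \<sigma>) k) z" "\<rho> \<le> dist ((a \<circ> \<sigma>) k) ((b \<circ> \<sigma>) k)" for k
      using \<sigma>(2)[of k] by simp_all
    moreover have "s \<le> dist ((b \<circ> \<sigma>) k) ((a \<circ> \<sigma>) j)" if "j \<noteq> k" for j k
      using \<sigma>(3)[OF that] by simp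
    ultimately have "m \<le> infdist (b (\<sigma> (2 * k + 1))) Z"
      using infdist_interleaved_ge[of \<eta> "b \<circ> \<sigma>" s z \<rho> "a \<circ> \<sigma>" k] by (simp add: m_def Z_def)
    then have "q (\<sigma> (2 * k + 1)) \<le> - m / d (\<sigma> (2 * k + 1))"
      using divide_right_mono[OF _ less_imp_le[OF d(1)]] by (simp add: q_def Z_def)
    also have "\<dots> \<le> - m / D"
      using \<open>m > 0\<close> d by (simp add: frac_le)
    finally show ?thesis .
  qed
  moreover have "strict_mono (\<lambda>k. \<sigma> (2 * k))" "strict_mono (\<lambda>k. \<sigma> (2 * k + 1))"
    using \<sigma>(1) by (auto simp: strict_mono_def)
  moreover have "- m / D < 0"
    using \<open>m > 0\<close> d(1)[of 0] d(2)[of 0] by simp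
  ultimately have "\<not> convergent q"
    by (intro not_convergent_if_subseqs_apart[where x = 0 and y = "- m / D"])
  then show ?thesis
    unfolding q_def[abs_def] by (auto simp: Z_def)
qed

lemma exists_infdist_quotient_not_convergent:
  fixes a b :: "nat \<Rightarrow> 'a::complete_space"
  assumes d: "\<And>n. 0 < d n" "\<And>n. d n \<le> D"
    and "\<rho> > 0" and apart: "\<forall>\<^sub>F n in sequentially. \<rho> \<le> dist (a n) (b n)"
    and no_conv: "\<And>\<sigma> :: nat \<Rightarrow> nat. strict_mono \<sigma> \<Longrightarrow> \<not> convergent ((\<lambda>n. (a n, b n)) \<circ> \<sigma>)"
  shows "\<exists>Z. z \<in> Z \<and> \<not> convergent (\<lambda>n. (infdist (a n) Z - infdist (b n) Z) / d n)"
proof -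
  obtain \<tau> :: "nat \<Rightarrow> nat" and \<eta> where "strict_mono \<tau>" "\<eta> > 0" and sep:
    "separated_seq \<eta> (b \<circ> \<tau>) \<and> (convergent (a \<circ> \<tau>) \<or> (\<exists>e>0. separated_seq e (a \<circ> \<tau>))) \<or>
     separated_seq \<eta> (a \<circ> \<tau>) \<and> (convergent (b \<circ> \<tau>) \<or> (\<exists>e>0. separated_seq e (b \<circ> \<tau>)))"
    using separated_pair_subseq[OF no_conv] by blast
  have d': "\<And>n. 0 < (d \<circ> \<tau>) n" "\<And>n. (d \<circ> \<tau>) n \<le> D"
    using d by simp_all
  have apart': "\<forall>\<^sub>F n in sequentially. \<rho> \<le> dist ((a \<circ> \<tau>) n) ((b \<circ> \<tau>) n)"
    using eventually_subseq[OF \<open>strict_mono \<tau>\<close> apart] by simp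
  have "\<exists>Z. z \<in> Z \<and> \<not> convergent (\<lambda>n. (infdist ((a \<circ> \<tau>) n) Z - infdist ((b \<circ> \<tau>) n) Z) / (d \<circ> \<tau>) n)"
    using sep
  proof
    assume b_sep: "separated_seq \<eta> (b \<circ> \<tau>) \<and> (convergent (a \<circ> \<tau>) \<or> (\<exists>e>0. separated_seq e (a \<circ> \<tau>)))"
    show ?thesis
      by (rule infdist_quotient_oscillates[OF \<open>\<eta> > 0\<close> b_sep[THEN conjunct1] b_sep[THEN conjunct2]
            \<open>\<rho> > 0\<close> apart' d'])
  next
    assume a_sep: "separated_seq \<eta> (a \<circ> \<tau>) \<and> (convergent (b \<circ> \<tau>) \<or> (\<exists>e>0. separated_seq e (b \<circ> \<tau>)))"
    have "\<forall>\<^sub>F n in sequentially. \<rho> \<le> dist ((b \<circ> \<tau>) n) ((a \<circ> \<tau>) n)"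
      using apart' by (simp add: dist_commute)
    then have "\<exists>Z. z \<in> Z \<and>
        \<not> convergent (\<lambda>n. (infdist ((b \<circ> \<tau>) n) Z - infdist ((a \<circ> \<tau>) n) Z) / (d \<circ> \<tau>) n)"
      by (rule infdist_quotient_oscillates[OF \<open>\<eta> > 0\<close> a_sep[THEN conjunct1] a_sep[THEN conjunct2]
            \<open>\<rho> > 0\<close> _ d'])
    then obtain Z where "z \<in> Z"
      and "\<not> convergent (\<lambda>n. (infdist ((b \<circ> \<tau>) n) Z - infdist ((a \<circ> \<tau>) n) Z) / (d \<circ> \<tau>) n)"
      by blast
    with convergent_diff_quotient_swap[of "\<lambda>n. infdist ((a \<circ> \<tau>) n) Z" "\<lambda>n. infdist ((b \<circ> \<tau>) n) Z" "d \<circ> \<tau>"]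
    show ?thesis
      by auto
  qed
  then obtain Z where "z \<in> Z"
    and not_conv: "\<not> convergent (\<lambda>n. (infdist ((a \<circ> \<tau>) n) Z - infdist ((b \<circ> \<tau>) n) Z) / (d \<circ> \<tau>) n)"
    by blast
  have "\<not> convergent (\<lambda>n. (infdist (a n) Z - infdist (b n) Z) / d n)"
  proof
    assume "convergent (\<lambda>n. (infdist (a n) Z - infdist (b n) Z) / d n)"
    from convergent_subseq_convergent[OF this \<open>strict_mono \<tau>\<close>] not_conv show False
      by (simp add: o_def)
  qed
  with \<open>z \<in> Z\<close> show ?thesis
    by blast
qed

section \<open>Radial truncation\<close>

definition clip :: "real \<Rightarrow> 'a::real_normed_vector \<Rightarrow> 'a" where
  "clip R w = (if norm w \<le> R then w else (R / norm w) *\<^sub>R w)"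

lemma norm_clip_le: "0 \<le> R \<Longrightarrow> norm (clip R w) \<le> R"
  by (simp add: clip_def)

lemma clip_eq_self: "norm w \<le> R \<Longrightarrow> clip R w = w"
  by (simp add: clip_def)

lemma norm_rescale_diff_le:
  fixes w v :: "'a::real_normed_vector"
  assumes "0 \<le> s" "s \<le> norm w"
  shows "norm ((s / norm w) *\<^sub>R w - v) \<le> (norm w - s) + norm (w - v)"
proof (cases "w = 0")
  case False
  have "(s / norm w) *\<^sub>R w - w = (s / norm w - 1) *\<^sub>R w"
    by (simp add: algebra_simps)
  then have "norm ((s / norm w) *\<^sub>R w - w) = \<bar>s / norm w - 1\<bar> * norm w"
    by simp
  also have "\<dots> = norm w - s"
    using False assms by (simp add: abs_if field_simps)
  finally show ?thesis
    using norm_diff_triangle_le[of "(s / norm w) *\<^sub>R w" w "norm w - s" v "norm (w - v)"] by simp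
qed (use assms in simp)

lemma norm_clip_diff_le_ordered:
  fixes w v :: "'a::real_normed_vector"
  assumes "0 \<le> R" "norm v \<le> norm w"
  shows "norm (clip R w - clip R v) \<le> 2 * norm (w - v)"
proof -
  have gap: "norm w - norm v \<le> norm (w - v)"
    by (rule norm_triangle_ineq2)
  consider "norm w \<le> R" | "norm v \<le> R" "R < norm w" | "R < norm v"
    using assms(2) by linarith
  then show ?thesis
  proof cases
    case 1
    with assms(2) show ?thesis by (simp add: clip_def)
  next
    case 2
    then have "norm ((R / norm w) *\<^sub>R w - v) \<le> (norm w - R) + norm (w - v)"
      using assms(1) by (intro norm_rescale_diff_le) auto
    with 2 gap show ?thesis by (simp add: clip_def)
  next
    case 3
    then have "norm v > 0" using assms(1) by linarith
    then have "(R / norm w) *\<^sub>R w - (R / norm v) *\<^sub>R v = (R / norm v) *\<^sub>R ((norm v / norm w) *\<^sub>R w - v)"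
      by (simp add: algebra_simps)
    moreover have "norm ((norm v / norm w) *\<^sub>R w - v) \<le> (norm w - norm v) + norm (w - v)"
      using assms(2) by (intro norm_rescale_diff_le) auto
    moreover have "R / norm v \<le> 1" "0 \<le> R / norm v"
      using 3 assms(1) by (auto simp: divide_le_eq_1)
    ultimately have "norm ((R / norm w) *\<^sub>R w - (R / norm v) *\<^sub>R v) \<le> 1 * (2 * norm (w - v))"
      using gap by (simp only: norm_scaleR abs_of_nonneg) (intro mult_mono; simp)
    with 3 assms(2) show ?thesis by (simp add: clip_def)
  qed
qed

lemma lipschitz_on_clip:
  assumes "0 \<le> R"
  shows "2-lipschitz_on UNIV (clip R :: 'a::real_normed_vector \<Rightarrow> 'a)"
proof (rule lipschitz_onI)
  show "dist (clip R w) (clip R v) \<le> 2 * dist w v" for w v :: 'a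
  proof (cases "norm v \<le> norm w")
    case True
    then show ?thesis using norm_clip_diff_le_ordered[OF assms True] by (simp add: dist_norm)
  next
    case False
    then show ?thesis using norm_clip_diff_le_ordered[OF assms, of w v]
      by (simp add: dist_norm norm_minus_commute)
  qed
qed simp

section \<open>Difference quotients in the Lipschitz-free space\<close>

lemma free_space_approx_on_finite_set:
  fixes gamma :: "('a::metric_space \<Rightarrow> 'k::real_normed_field) \<Rightarrow> 'k"
  assumes "gamma \<in> free_space z" "e > 0"
  obtains S where "finite S"
    "\<And>g h L M. g \<in> Lip0 z \<Longrightarrow> h \<in> Lip0 z \<Longrightarrow> L-lipschitz_on UNIV g \<Longrightarrow> M-lipschitz_on UNIV h
      \<Longrightarrow> (\<And>x. x \<in> S \<Longrightarrow> g x = h x) \<Longrightarrow> norm (gamma g - gamma h) \<le> e * (L + M)"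
proof -
  obtain phi :: "nat \<Rightarrow> _" where phi: "\<And>k. phi k \<in> span_deltas"
    and conv: "\<forall>e>0. \<exists>K. \<forall>k\<ge>K. dual_norm_le z (\<lambda>g. phi k g - gamma g) e"
    using assms(1) unfolding free_space_def by blast
  obtain K where "\<forall>k\<ge>K. dual_norm_le z (\<lambda>g. phi k g - gamma g) e"
    using conv assms(2) by blast
  then have approx: "dual_norm_le z (\<lambda>g. phi K g - gamma g) e"
    by simp
  obtain S c where "finite S" and phi_K: "phi K = (\<lambda>g. \<Sum>x\<in>S. c x * delta x g)"
    using phi[of K] unfolding span_deltas_def by blast
  show thesis
  proof (rule that[OF \<open>finite S\<close>])
    fix g h :: "'a \<Rightarrow> 'k" and L M :: real
    assume g: "g \<in> Lip0 z" "L-lipschitz_on UNIV g" and h: "h \<in> Lip0 z" "M-lipschitz_on UNIV h"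
      and agree: "\<And>x. x \<in> S \<Longrightarrow> g x = h x"
    have "phi K g = phi K h"
      unfolding phi_K delta_def by (rule sum.cong) (simp_all add: agree)
    then have "gamma g - gamma h = (phi K h - gamma h) - (phi K g - gamma g)"
      by simp
    also have "norm \<dots> \<le> norm (phi K h - gamma h) + norm (phi K g - gamma g)"
      by (rule norm_triangle_ineq4)
    also have "\<dots> \<le> e * M + e * L"
      using approx g h unfolding dual_norm_le_def by (intro add_mono) blast+
    finally show "norm (gamma g - gamma h) \<le> e * (L + M)"
      by (simp add: algebra_simps)
  qed
qed

lemma lipschitz_on_infdist:
  "1-lipschitz_on UNIV (\<lambda>p. of_real (infdist p Z) :: 'k::real_normed_field)"
  unfolding lipschitz_on_def by (simp add: dist_real_def infdist_triangle_abs)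

lemma infdist_Lip0:
  "z \<in> Z \<Longrightarrow> (\<lambda>p. of_real (infdist p Z) :: 'k::real_normed_field) \<in> Lip0 z"
  using lipschitz_on_infdist unfolding Lip0_def by auto

locale difference_quotients =
  fixes a b :: "nat \<Rightarrow> 'a::metric_space" and d :: "nat \<Rightarrow> real" and z :: 'a
    and gamma :: "('a \<Rightarrow> 'k::real_normed_field) \<Rightarrow> 'k"
  assumes d_pos: "0 < d n"
    and tendsto_gamma: "g \<in> Lip0 z \<Longrightarrow> (\<lambda>n. (g (a n) - g (b n)) / of_real (d n)) \<longlonglongrightarrow> gamma g"
begin

lemma gamma_zero: "gamma (\<lambda>_. 0) = 0"
proof -
  have "(\<lambda>_. 0) \<in> Lip0 z"
    unfolding Lip0_def using lipschitz_on_constant by blast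
  from tendsto_gamma[OF this] show ?thesis
    by (simp add: LIMSEQ_const_iff)
qed

lemma norm_quotient_le:
  fixes g :: "'a \<Rightarrow> 'k"
  assumes "L-lipschitz_on UNIV g"
  shows "norm ((g (a n) - g (b n)) / of_real (d n)) \<le> L * dist (a n) (b n) / d n"
proof -
  have "norm ((g (a n) - g (b n)) / of_real (d n)) = norm (g (a n) - g (b n)) / d n"
    using d_pos[of n] by (simp add: norm_divide)
  also have "\<dots> \<le> L * dist (a n) (b n) / d n"
    using lipschitz_onD[OF assms, of "a n" "b n"] d_pos[of n] by (simp add: dist_norm divide_right_mono)
  finally show ?thesis .
qed

lemma nonzero_imp_eventually_dist_gt:
  assumes "\<not> is_zero_fun z gamma"
  obtains c where "c > 0" "\<forall>\<^sub>F n in sequentially. c * d n < dist (a n) (b n)"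
proof -
  obtain g where g: "g \<in> Lip0 z" "gamma g \<noteq> 0"
    using assms unfolding is_zero_fun_def by blast
  then obtain L where L: "L-lipschitz_on UNIV g"
    unfolding Lip0_def by blast
  then have "L \<ge> 0" by (rule lipschitz_on_nonneg)
  define N where "N = norm (gamma g)"
  have "N > 0" using g(2) by (simp add: N_def)
  have "\<forall>\<^sub>F n in sequentially. N / 2 < norm ((g (a n) - g (b n)) / of_real (d n))"
    using order_tendstoD(1)[OF tendsto_norm[OF tendsto_gamma[OF g(1)]], of "N / 2"] \<open>N > 0\<close>
    by (simp add: N_def)
  then have "\<forall>\<^sub>F n in sequentially. N / (2 * (L + 1)) * d n < dist (a n) (b n)"
  proof eventually_elim
    case (elim n)
    have "N / 2 * d n < norm ((g (a n) - g (b n)) / of_real (d n)) * d n"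
      using elim d_pos[of n] by (rule mult_strict_right_mono)
    also have "\<dots> \<le> L * dist (a n) (b n)"
      using norm_quotient_le[OF L, of n] d_pos[of n] by (simp add: le_divide_eq)
    also have "\<dots> \<le> (L + 1) * dist (a n) (b n)"
      by (simp add: algebra_simps)
    finally show ?case
      using \<open>L \<ge> 0\<close> by (simp add: field_simps)
  qed
  moreover have "N / (2 * (L + 1)) > 0"
    using \<open>N > 0\<close> \<open>L \<ge> 0\<close> by simp
  ultimately show thesis
    using that by blast
qed

lemma vanishes_on_bounded_if_unbounded:
  assumes "\<not> bounded (range d)" "g \<in> Lip0 z" "\<And>x. norm (g x) \<le> K"
  shows "gamma g = 0"
proof (rule zero_if_norm_le_multiples)
  fix \<delta> :: real assume "0 < \<delta>"
  have "\<exists>\<^sub>F n in sequentially. 2 * K / \<delta> \<le> d n"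
    using d_pos assms(1) by (intro frequently_ge_if_unbounded) (auto intro: less_imp_le)
  then have "\<exists>\<^sub>F n in sequentially. norm ((g (a n) - g (b n)) / of_real (d n)) \<le> \<delta>"
  proof (rule frequently_elim1)
    fix n assume "2 * K / \<delta> \<le> d n"
    moreover have "norm (g (a n) - g (b n)) \<le> 2 * K"
      using norm_triangle_ineq4[of "g (a n)" "g (b n)"] assms(3)[of "a n"] assms(3)[of "b n"] by simp
    ultimately show "norm ((g (a n) - g (b n)) / of_real (d n)) \<le> \<delta>"
      using d_pos[of n] \<open>0 < \<delta>\<close> by (simp add: norm_divide field_simps)
  qed
  with tendsto_norm[OF tendsto_gamma[OF assms(2)]] show "norm (gamma g) \<le> \<delta> * 1"
    by (simp add: tendsto_le_if_frequently_le)
qed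

lemma zero_if_unbounded:
  assumes "gamma \<in> free_space z" "\<not> bounded (range d)"
  shows "is_zero_fun z gamma"
  unfolding is_zero_fun_def
proof
  fix g :: "'a \<Rightarrow> 'k" assume "g \<in> Lip0 z"
  then obtain L where L: "L-lipschitz_on UNIV g" and "g z = 0"
    unfolding Lip0_def by blast
  show "gamma g = 0"
  proof (rule zero_if_norm_le_multiples)
    fix e :: real assume "0 < e"
    then obtain S where "finite S" and approx: "\<And>g h L M. g \<in> Lip0 z \<Longrightarrow> h \<in> Lip0 z
        \<Longrightarrow> L-lipschitz_on UNIV g \<Longrightarrow> M-lipschitz_on UNIV h
        \<Longrightarrow> (\<And>x. x \<in> S \<Longrightarrow> g x = h x) \<Longrightarrow> norm (gamma g - gamma h) \<le> e * (L + M)"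
      using free_space_approx_on_finite_set[OF assms(1)] by blast
    define R where "R = 1 + (\<Sum>x\<in>S. norm (g x))"
    have R: "norm (g x) \<le> R" if "x \<in> S" for x
      using member_le_sum[OF that, of "\<lambda>x. norm (g x)"] \<open>finite S\<close> by (simp add: R_def)
    have "R \<ge> 0" by (simp add: R_def sum_nonneg)
    define g' where "g' = clip R \<circ> g"
    have L': "(2 * L)-lipschitz_on UNIV g'"
      unfolding g'_def
      using lipschitz_on_compose[OF L lipschitz_on_subset[OF lipschitz_on_clip[OF \<open>R \<ge> 0\<close>]]] by simp
    then have "g' \<in> Lip0 z"
      using \<open>g z = 0\<close> \<open>R \<ge> 0\<close> by (auto simp: Lip0_def g'_def clip_eq_self)
    then have "gamma g' = 0"
      using norm_clip_le[OF \<open>R \<ge> 0\<close>]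
      by (intro vanishes_on_bounded_if_unbounded[OF assms(2), of g' R]) (simp_all add: g'_def)
    moreover have "norm (gamma g - gamma g') \<le> e * (L + 2 * L)"
      using \<open>g \<in> Lip0 z\<close> \<open>g' \<in> Lip0 z\<close> L L' R by (intro approx) (simp_all add: g'_def clip_eq_self)
    ultimately show "norm (gamma g) \<le> e * (3 * L)"
      by simp
  qed
qed

end

lemma zero_if_dist_tendsto_zero:
  fixes a b :: "nat \<Rightarrow> 'a::complete_space" and gamma :: "('a \<Rightarrow> 'k::real_normed_field) \<Rightarrow> 'k"
  assumes "difference_quotients a b d z gamma" "gamma \<in> free_space z"
    and shrink: "(\<lambda>n. dist (a n) (b n)) \<longlonglongrightarrow> 0"
  shows "is_zero_fun z gamma"
proof (rule ccontr)
  interpret difference_quotients a b d z gamma by fact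
  assume "\<not> is_zero_fun z gamma"
  then obtain c where "c > 0" and c: "\<forall>\<^sub>F n in sequentially. c * d n < dist (a n) (b n)"
    by (rule nonzero_imp_eventually_dist_gt)
  then obtain S where "finite S" and approx: "\<And>g h L M. g \<in> Lip0 z \<Longrightarrow> h \<in> Lip0 z
      \<Longrightarrow> L-lipschitz_on UNIV g \<Longrightarrow> M-lipschitz_on UNIV h
      \<Longrightarrow> (\<And>x. x \<in> S \<Longrightarrow> g x = h x) \<Longrightarrow> norm (gamma g - gamma h) \<le> c / 8 * (L + M)"
    using free_space_approx_on_finite_set[OF assms(2), of "c / 8"] by auto
  obtain Z and \<mu> :: "nat \<Rightarrow> nat" where "insert z S \<subseteq> Z" "strict_mono \<mu>"
    and gap: "\<And>k. dist (a (\<mu> k)) (b (\<mu> k)) / 4 \<le> \<bar>infdist (a (\<mu> k)) Z - infdist (b (\<mu> k)) Z\<bar>"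
    using shrinking_pairs_infdist_gap[OF _ shrink, of "insert z S"] \<open>finite S\<close> by blast
  define H where "H p = (of_real (infdist p Z) :: 'k)" for p
  have "H \<in> Lip0 z" "1-lipschitz_on UNIV H"
    using infdist_Lip0 lipschitz_on_infdist \<open>insert z S \<subseteq> Z\<close> by (auto simp: H_def[abs_def])
  have "norm (gamma H - gamma (\<lambda>_. 0)) \<le> c / 8 * (1 + 0)"
    using \<open>insert z S \<subseteq> Z\<close>
    by (intro approx \<open>H \<in> Lip0 z\<close> \<open>1-lipschitz_on UNIV H\<close> lipschitz_on_constant)
      (auto simp: H_def Lip0_def intro: lipschitz_on_constant)
  then have upper: "norm (gamma H) \<le> c / 8"
    by (simp add: gamma_zero)
  have "(\<lambda>k. norm ((H (a (\<mu> k)) - H (b (\<mu> k))) / of_real (d (\<mu> k)))) \<longlonglongrightarrow> norm (gamma H)"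
    using tendsto_norm[OF LIMSEQ_subseq_LIMSEQ[OF tendsto_gamma[OF \<open>H \<in> Lip0 z\<close>] \<open>strict_mono \<mu>\<close>]]
    by (simp add: o_def)
  moreover have "\<forall>\<^sub>F k in sequentially. c / 4 \<le> norm ((H (a (\<mu> k)) - H (b (\<mu> k))) / of_real (d (\<mu> k)))"
    using eventually_subseq[OF \<open>strict_mono \<mu>\<close> c]
  proof eventually_elim
    case (elim k)
    have "c * d (\<mu> k) / 4 \<le> \<bar>infdist (a (\<mu> k)) Z - infdist (b (\<mu> k)) Z\<bar>"
      using elim gap[of k] by simp
    then show ?case
      using d_pos[of "\<mu> k"] by (simp add: H_def norm_divide le_divide_eq flip: of_real_diff)
  qed
  ultimately have "c / 4 \<le> norm (gamma H)"
    by (rule tendsto_lowerbound) simp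
  with upper \<open>c > 0\<close> show False
    by simp
qed

lemma convergent_subseq_if_nonzero:
  fixes a b :: "nat \<Rightarrow> 'a::complete_space" and gamma :: "('a \<Rightarrow> 'k::real_normed_field) \<Rightarrow> 'k"
  assumes "difference_quotients a b d z gamma" "\<not> is_zero_fun z gamma"
    and "bounded (range d)" "\<alpha> > 0" "\<And>n. \<alpha> \<le> d n"
  shows "\<exists>\<sigma> :: nat \<Rightarrow> nat. strict_mono \<sigma> \<and> convergent ((\<lambda>n. (a n, b n)) \<circ> \<sigma>)"
proof (rule ccontr)
  interpret difference_quotients a b d z gamma by fact
  assume "\<not> ?thesis"
  then have no_conv: "\<And>\<sigma> :: nat \<Rightarrow> nat. strict_mono \<sigma> \<Longrightarrow> \<not> convergent ((\<lambda>n. (a n, b n)) \<circ> \<sigma>)"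
    by blast
  obtain c where "c > 0" and c: "\<forall>\<^sub>F n in sequentially. c * d n < dist (a n) (b n)"
    using nonzero_imp_eventually_dist_gt[OF assms(2)] by blast
  have apart: "\<forall>\<^sub>F n in sequentially. c * \<alpha> \<le> dist (a n) (b n)"
    using c
  proof eventually_elim
    case (elim n)
    moreover have "c * \<alpha> \<le> c * d n"
      using \<open>c > 0\<close> assms(5)[of n] by simp
    ultimately show ?case by linarith
  qed
  obtain D where "\<forall>x\<in>range d. \<bar>x\<bar> \<le> D"
    using assms(3) unfolding bounded_real by blast
  then have D: "\<And>n. d n \<le> D"
    by (auto dest: abs_le_D1)
  have "0 < c * \<alpha>"
    using \<open>c > 0\<close> \<open>\<alpha> > 0\<close> by simp
  then have "\<exists>Z. z \<in> Z \<and> \<not> convergent (\<lambda>n. (infdist (a n) Z - infdist (b n) Z) / d n)"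
    by (rule exists_infdist_quotient_not_convergent[OF d_pos D _ apart no_conv])
  then obtain Z where "z \<in> Z"
    and not_conv: "\<not> convergent (\<lambda>n. (infdist (a n) Z - infdist (b n) Z) / d n)"
    by blast
  have "(\<lambda>n. of_real ((infdist (a n) Z - infdist (b n) Z) / d n) :: 'k) \<longlonglongrightarrow> gamma (\<lambda>p. of_real (infdist p Z))"
    using tendsto_gamma[OF infdist_Lip0[OF \<open>z \<in> Z\<close>]] by simp
  then have "convergent (\<lambda>n. (infdist (a n) Z - infdist (b n) Z) / d n)"
    by (rule convergent_if_of_real_tendsto)
  with not_conv show False ..
qed

theorem lemma2p3:
  fixes f :: "'a::complete_space \<Rightarrow> 'b::complete_space"
    and zM :: 'a and zN :: 'b
    and x y :: "nat \<Rightarrow> 'a"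
    and gamma :: "('b \<Rightarrow> 'k::real_normed_field) \<Rightarrow> 'k"
    and m :: "nat \<Rightarrow> ('b \<Rightarrow> 'k) \<Rightarrow> 'k"
  assumes f_lip: "\<exists>C. C-lipschitz_on UNIV f"
    and f_base: "f zM = zN"
    and xy_ne: "\<And>n. x n \<noteq> y n"
    and m_def: "\<And>n. m n = (\<lambda>g. (delta (f (x n)) g - delta (f (y n)) g) / of_real (dist (x n) (y n)))"
    and gamma_in: "gamma \<in> free_space zN"
    and conv: "weak_conv zN m gamma"
  shows "((\<lambda>n. dist (x n) (y n)) \<longlonglongrightarrow> 0 \<longrightarrow> is_zero_fun zN gamma)
       \<and> (filterlim (\<lambda>n. dist (x n) (y n)) at_top sequentially \<longrightarrow> is_zero_fun zN gamma)
       \<and> ((\<exists>\<alpha>>0. \<forall>n. dist (x n) (y n) \<ge> \<alpha>) \<and> \<not> is_zero_fun zN gamma \<longrightarrow>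
            bounded (range (\<lambda>n. dist (x n) (y n))) \<and>
            (\<exists>p :: 'b \<times> 'b. \<forall>U. open U \<longrightarrow> p \<in> U \<longrightarrow>
                (\<exists>\<^sub>F n in sequentially. (f (x n), f (y n)) \<in> U)))"
proof -
  let ?d = "\<lambda>n. dist (x n) (y n)"
  have dq: "difference_quotients (f \<circ> x) (f \<circ> y) ?d zN gamma"
  proof
    show "0 < ?d n" for n
      using xy_ne[of n] by simp
    show "(\<lambda>n. (g ((f \<circ> x) n) - g ((f \<circ> y) n)) / of_real (?d n)) \<longlonglongrightarrow> gamma g" if "g \<in> Lip0 zN" for g
      using conv that unfolding weak_conv_def m_def delta_def by simp
  qed
  obtain C where "C-lipschitz_on UNIV f"
    using f_lip by blast
  then have "is_zero_fun zN gamma" if "?d \<longlonglongrightarrow> 0"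
    using zero_if_dist_tendsto_zero[OF dq gamma_in] dist_tendsto_zero_if_lipschitz that by auto
  moreover have "is_zero_fun zN gamma" if "filterlim ?d at_top sequentially"
    using difference_quotients.zero_if_unbounded[OF dq gamma_in] unbounded_if_filterlim_at_top[OF that] .
  moreover have "bounded (range ?d) \<and> (\<exists>p. \<forall>U. open U \<longrightarrow> p \<in> U \<longrightarrow> (\<exists>\<^sub>F n in sequentially. (f (x n), f (y n)) \<in> U))"
    if \<alpha>: "\<alpha> > 0" "\<And>n. \<alpha> \<le> ?d n" and nonzero: "\<not> is_zero_fun zN gamma" for \<alpha>
  proof
    show "bounded (range ?d)"
      using difference_quotients.zero_if_unbounded[OF dq gamma_in] nonzero by blast
    then obtain \<sigma> :: "nat \<Rightarrow> nat" and p where "strict_mono \<sigma>" "((\<lambda>n. (f (x n), f (y n))) \<circ> \<sigma>) \<longlonglongrightarrow> p"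
      using convergent_subseq_if_nonzero[OF dq nonzero _ \<alpha>] unfolding convergent_def by auto
    then show "\<exists>p. \<forall>U. open U \<longrightarrow> p \<in> U \<longrightarrow> (\<exists>\<^sub>F n in sequentially. (f (x n), f (y n)) \<in> U)"
      using frequently_mem_if_subseq_tendsto by blast
  qed
  ultimately show ?thesis
    by blast
qed

end
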